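(* There is an absolute constant $c>0$ such that the following holds. Consider sequences of integers $k=k(n)\ge1$, $d=d(n)$, $t=t(n)$ with $d\ge 2k$ and $(d+1)\mid t$, and for each $n$ an average-case $d$-runlength NAGT scheme with $t$ tests for $n$ items and $k$ defectives (with average error probability $o_n(1)$). Then for all sufficiently large $n$, $$t\ge c\,\frac{d\log(n/k)}{\log(d/k)}.$$
   Context: $\log$ denotes the base-2 logarithm. A binary $t\times n$ matrix $M$ is $d$-runlength constrained if in every column, any two $1$'s are separated by a run of at least $d$ zeros, i.e. $M_{ij}=M_{i'j}=1$ with $i<i'$ implies $i'-i\ge d+1$. For $x\in\{0,1\}^n$ the NAGT outcome is $M\odot x=\bigvee_{j:x_j=1}M_{\cdot j}$ (entrywise OR). An average-case $d$-runlength NAGT scheme is a random binary $t\times n$ matrix $\mathsf{M}$, every realization of which is $d$-runlength constrained, together with a deterministic decoder $\mathsf{Dec}$, such that $$\frac{1}{\binom nk}\sum_{x\in\{0,1\}^n:\,\mathsf{wgt}(x)=k}\mathbf P_{\mathsf M}\{\mathsf{Dec}(\mathsf M,\mathsf M\odot x)\ne x\}=o_n(1),$$ where $\mathsf{wgt}$ is Hamming weight. *)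

theory Defs
  imports "HOL-Probability.Probability"
begin

text \<open>A binary t x n matrix is a function M :: nat => nat => bool (M i j = entry in row i,
  column j), required to vanish outside rows 0..<t and columns 0..<n.\<close>

type_synonym bmatrix = "nat \<Rightarrow> nat \<Rightarrow> bool"
type_synonym bvec = "nat \<Rightarrow> bool"

definition is_bmatrix :: "nat \<Rightarrow> nat \<Rightarrow> bmatrix \<Rightarrow> bool" where
  "is_bmatrix t n M \<longleftrightarrow> (\<forall>i j. M i j \<longrightarrow> i < t \<and> j < n)"

definition runlength_constrained :: "nat \<Rightarrow> bmatrix \<Rightarrow> bool" where
  "runlength_constrained d M \<longleftrightarrow>
     (\<forall>i i' j. M i j \<and> M i' j \<and> i < i' \<longrightarrow> i' - i \<ge> d + 1)"

definition weight_vecs :: "nat \<Rightarrow> nat \<Rightarrow> bvec set" where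
  "weight_vecs n k = {x. (\<forall>j. x j \<longrightarrow> j < n) \<and> card {j. j < n \<and> x j} = k}"

definition nagt_outcome :: "nat \<Rightarrow> nat \<Rightarrow> bmatrix \<Rightarrow> bvec \<Rightarrow> bvec" where
  "nagt_outcome t n M x = (\<lambda>i. i < t \<and> (\<exists>j<n. x j \<and> M i j))"

definition avg_error ::
  "nat \<Rightarrow> nat \<Rightarrow> nat \<Rightarrow> bmatrix pmf \<Rightarrow> (bmatrix \<Rightarrow> bvec \<Rightarrow> bvec) \<Rightarrow> real" where
  "avg_error t n k Mp Dec =
     (1 / real (n choose k)) *
     (\<Sum>x\<in>weight_vecs n k. measure_pmf.prob Mp {M. Dec M (nagt_outcome t n M x) \<noteq> x})"

end

theory Submission
  imports Defs
begin

text \<open>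
  A column of a d-runlength constrained matrix with t = (d+1)w rows has at most w ones, one in
  each block of d+1 consecutive rows. Hence every outcome has at most m = kw positive tests, and
  the number of possible outcomes is at most the sum of C(t,i) over i \<le> m, which is at most
  (et/m)^m \<le> (d/k)^(4m). An average error below 1/4 forces some realisation of the matrix to
  decode more than 3/4 of the C(n,k) inputs correctly, and these inputs have pairwise distinct
  outcomes. Comparing (n/k)^k \<le> C(n,k) with (d/k)^(8m) and taking logarithms gives
  t \<ge> dw \<ge> d log(n/k) / (8 log(d/k)).
\<close>

lemma sum_prob_eq_expectation_card:
  fixes p :: "'a pmf"
  assumes "finite W"
  shows "(\<Sum>x\<in>W. measure_pmf.prob p {M. P M x}) =
         measure_pmf.expectation p (\<lambda>M. real (card {x\<in>W. P M x}))"
proof -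
  have "(\<Sum>x\<in>W. measure_pmf.prob p {M. P M x}) =
        (\<Sum>x\<in>W. measure_pmf.expectation p (indicator {M. P M x}))"
    by simp
  also have "\<dots> = measure_pmf.expectation p (\<lambda>M. \<Sum>x\<in>W. indicator {M. P M x} M)"
    by (subst Bochner_Integration.integral_sum)
       (auto intro!: measure_pmf.integrable_const_bound[where B=1])
  also have "\<dots> = measure_pmf.expectation p (\<lambda>M. real (card {x\<in>W. P M x}))"
    using assms by (simp add: indicator_def sum.If_cases Int_def)
  finally show ?thesis .
qed

lemma pmf_obtain_card_less:
  fixes p :: "'a pmf"
  assumes "finite W" and "(\<Sum>x\<in>W. measure_pmf.prob p {M. P M x}) < B"
  obtains M where "M \<in> set_pmf p" and "real (card {x\<in>W. P M x}) < B"
proof -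
  have "\<exists>M\<in>set_pmf p. real (card {x\<in>W. P M x}) < B"
  proof (rule ccontr)
    assume "\<not> ?thesis"
    then have "B \<le> measure_pmf.expectation p (\<lambda>M. real (card {x\<in>W. P M x}))"
      by (intro measure_pmf.integral_ge_const measure_pmf.integrable_const_bound[where B="card W"])
         (auto intro!: AE_pmfI card_mono assms(1) simp: not_less)
    then show False
      using assms by (simp add: sum_prob_eq_expectation_card)
  qed
  then show ?thesis using that by blast
qed

lemma div_eq_imp_diff_less:
  fixes a b D :: nat
  assumes "a \<le> b" and "a div D = b div D" and "D > 0"
  shows "b - a < D"
proof -
  have "a = D * (a div D) + a mod D" by simp
  moreover have "b = D * (a div D) + b mod D" using assms(2) by simp
  moreover have "b mod D < D" using assms(3) by simp
  ultimately show ?thesis using assms(1) by linarith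
qed

text \<open>Distinct ones of a column lie in distinct blocks of d+1 consecutive rows.\<close>

lemma card_column_le:
  assumes "is_bmatrix t n M" and "runlength_constrained d M" and "(d + 1) dvd t"
  shows "card {i. M i j} \<le> t div (d + 1)"
proof -
  let ?block = "\<lambda>i. i div (d + 1)"
  have "inj_on ?block {i. M i j}"
  proof (rule linorder_inj_onI')
    fix a b assume "a \<in> {i. M i j}" "b \<in> {i. M i j}" "a < b"
    then have "d + 1 \<le> b - a"
      using assms(2) unfolding runlength_constrained_def by blast
    then show "?block a \<noteq> ?block b"
      using div_eq_imp_diff_less[of a b "d + 1"] \<open>a < b\<close> by fastforce
  qed
  moreover have "?block ` {i. M i j} \<subseteq> {..< t div (d + 1)}"
  proof -
    obtain w where t: "t = (d + 1) * w" using assms(3) by blast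
    show ?thesis
    proof
      fix y assume "y \<in> ?block ` {i. M i j}"
      then obtain i where "M i j" and y: "y = ?block i" by auto
      then have "i < w * (d + 1)" using assms(1) t by (auto simp: is_bmatrix_def mult.commute)
      then have "?block i < w" by (rule less_mult_imp_div_less)
      moreover have "t div (d + 1) = w" unfolding t by (rule nonzero_mult_div_cancel_left) simp
      ultimately show "y \<in> {..< t div (d + 1)}" using y by simp
    qed
  qed
  ultimately have "card {i. M i j} \<le> card {..< t div (d + 1)}"
    by (intro card_inj_on_le) auto
  then show ?thesis by simp
qed

lemma card_nagt_outcome_le:
  assumes "is_bmatrix t n M" and "runlength_constrained d M" and "(d + 1) dvd t"
    and "x \<in> weight_vecs n k"
  shows "card {i. nagt_outcome t n M x i} \<le> k * (t div (d + 1))"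
proof -
  let ?J = "{j. j < n \<and> x j}"
  have J: "finite ?J" "card ?J = k" using assms(4) by (simp_all add: weight_vecs_def)
  have fin: "finite {i. M i j}" for j
    by (rule finite_subset[of _ "{..<t}"]) (use assms(1) in \<open>auto simp: is_bmatrix_def\<close>)
  have "{i. nagt_outcome t n M x i} \<subseteq> (\<Union>j\<in>?J. {i. M i j})"
    by (auto simp: nagt_outcome_def)
  then have "card {i. nagt_outcome t n M x i} \<le> card (\<Union>j\<in>?J. {i. M i j})"
    by (rule card_mono[rotated]) (use J fin in blast)
  also have "\<dots> \<le> (\<Sum>j\<in>?J. card {i. M i j})"
    by (rule card_UN_le) (rule J)
  also have "\<dots> \<le> (\<Sum>j\<in>?J. t div (d + 1))"
    by (rule sum_mono) (rule card_column_le[OF assms(1-3)])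
  also have "\<dots> = k * (t div (d + 1))" using J by simp
  finally show ?thesis .
qed

lemma
  fixes t m :: nat
  defines "Y \<equiv> {y :: bvec. (\<forall>i. y i \<longrightarrow> i < t) \<and> card {i. y i} \<le> m}"
  shows finite_sparse_bvecs: "finite Y"
    and card_sparse_bvecs_le: "card Y \<le> (\<Sum>i\<le>m. t choose i)"
proof -
  let ?T = "\<Union>i\<le>m. {S. S \<subseteq> {..<t} \<and> card S = i}"
  have inj: "inj_on (\<lambda>y. {i. y i}) Y" by (rule inj_onI) auto
  have img: "(\<lambda>y. {i. y i}) ` Y \<subseteq> ?T" unfolding Y_def by auto
  have fin: "finite ?T" by auto
  show "finite Y" using finite_imageD[OF finite_subset[OF img fin] inj] .
  have "card Y \<le> card ?T" using card_inj_on_le[OF inj img fin] .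
  also have "\<dots> \<le> (\<Sum>i\<le>m. card {S. S \<subseteq> {..<t} \<and> card S = i})" by (rule card_UN_le) auto
  also have "\<dots> = (\<Sum>i\<le>m. t choose i)" by (simp add: n_subsets)
  finally show "card Y \<le> (\<Sum>i\<le>m. t choose i)" .
qed

lemma bij_betw_weight_vecs_subsets:
  "bij_betw (\<lambda>x. {j. x j}) (weight_vecs n k) {S. S \<subseteq> {..<n} \<and> card S = k}"
proof (rule bij_betw_imageI)
  show "inj_on (\<lambda>x. {j. x j}) (weight_vecs n k)" by (rule inj_onI) auto
  show "(\<lambda>x. {j. x j}) ` weight_vecs n k = {S. S \<subseteq> {..<n} \<and> card S = k}"
  proof (intro equalityI subsetI)
    fix S assume "S \<in> (\<lambda>x. {j. x j}) ` weight_vecs n k"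
    then obtain x where x: "x \<in> weight_vecs n k" and S: "S = {j. x j}" by blast
    then have "S = {j. j < n \<and> x j}" by (auto simp: weight_vecs_def)
    then show "S \<in> {S. S \<subseteq> {..<n} \<and> card S = k}" using x by (auto simp: weight_vecs_def)
  next
    fix S assume S: "S \<in> {S. S \<subseteq> {..<n} \<and> card S = k}"
    then have "{j. j < n \<and> j \<in> S} = S" by auto
    then have "(\<lambda>j. j \<in> S) \<in> weight_vecs n k" using S by (auto simp: weight_vecs_def)
    then show "S \<in> (\<lambda>x. {j. x j}) ` weight_vecs n k" by (rule rev_image_eqI) simp
  qed
qed

lemma finite_weight_vecs: "finite (weight_vecs n k)"
  using bij_betw_finite[OF bij_betw_weight_vecs_subsets] by auto

lemma card_weight_vecs: "card (weight_vecs n k) = n choose k"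
  using bij_betw_same_card[OF bij_betw_weight_vecs_subsets] by (simp add: n_subsets)

lemma sum_binomial_le_exp_pow:
  fixes m t :: nat
  assumes "1 \<le> m" and "m \<le> t"
  shows "real (\<Sum>i\<le>m. t choose i) \<le> exp (real m) * (real t / real m) ^ m"
proof -
  define q where "q = real m / real t"
  have q: "0 < q" "q \<le> 1" using assms by (auto simp: q_def)
  have "q ^ m * real (\<Sum>i\<le>m. t choose i) = (\<Sum>i\<le>m. real (t choose i) * q ^ m)"
    by (simp add: sum_distrib_left mult.commute)
  also have "\<dots> \<le> (\<Sum>i\<le>m. real (t choose i) * q ^ i)"
    using q by (intro sum_mono mult_left_mono power_decreasing) auto
  also have "\<dots> \<le> (\<Sum>i\<le>t. real (t choose i) * q ^ i)"
    using assms q by (intro sum_mono2) auto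
  also have "\<dots> = (q + 1) ^ t" by (simp add: binomial_ring mult.commute)
  also have "\<dots> \<le> exp q ^ t"
    using q by (intro power_mono) (auto simp: add.commute intro: exp_ge_add_one_self)
  also have "\<dots> = exp (real m)" using assms by (simp add: q_def exp_of_nat_mult[symmetric])
  finally have "q ^ m * real (\<Sum>i\<le>m. t choose i) \<le> exp (real m)" .
  then have "real (\<Sum>i\<le>m. t choose i) \<le> exp (real m) / q ^ m"
    using q by (simp add: field_simps)
  then show ?thesis by (simp add: q_def power_divide)
qed

lemma three_mult_succ_le_pow4:
  fixes r :: real
  assumes "r \<ge> 2"
  shows "3 * (r + 1) \<le> r ^ 4"
proof -
  have "(2::real) ^ 3 \<le> r ^ 3" using assms by (intro power_mono) auto
  then have "8 * r \<le> r ^ 3 * r" using assms by (intro mult_right_mono) auto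
  then show ?thesis using assms by (simp add: power_Suc2[symmetric] del: power_Suc)
qed

lemma sum_binomial_le_ratio_pow:
  fixes k d w :: nat
  assumes "k \<ge> 1" and "d \<ge> 2 * k" and "w \<ge> 1"
  shows "real (\<Sum>i\<le>k * w. ((d + 1) * w) choose i) \<le> (real d / real k) ^ (4 * (k * w))"
proof -
  define r where "r = real d / real k"
  have r2: "r \<ge> 2" using assms(1,2) by (simp add: r_def field_simps)
  have ratio: "real ((d + 1) * w) / real (k * w) = r + 1 / real k"
    using assms(1,3) by (simp add: r_def field_simps)
  have "real (\<Sum>i\<le>k * w. ((d + 1) * w) choose i)
        \<le> exp (real (k * w)) * (real ((d + 1) * w) / real (k * w)) ^ (k * w)"
    using assms by (intro sum_binomial_le_exp_pow mult_right_mono) auto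
  also have "\<dots> = exp (real (k * w)) * (r + 1 / real k) ^ (k * w)"
    by (simp only: ratio)
  also have "\<dots> = (exp 1 * (r + 1 / real k)) ^ (k * w)"
    by (simp add: power_mult_distrib exp_of_nat_mult[symmetric])
  also have "\<dots> \<le> (r ^ 4) ^ (k * w)"
  proof (rule power_mono)
    have "exp 1 * (r + 1 / real k) \<le> 3 * (r + 1)"
      using assms(1) r2 exp_le by (intro mult_mono) auto
    then show "exp 1 * (r + 1 / real k) \<le> r ^ 4"
      using three_mult_succ_le_pow4[OF r2] by linarith
  qed (use r2 in auto)
  finally show ?thesis by (simp add: r_def power_mult)
qed

text \<open>Correctly decoded inputs have pairwise distinct outcomes, all of weight at most k t/(d+1).\<close>

lemma binomial_less_sum_binomial:
  assumes supp: "\<forall>M\<in>set_pmf Mp. is_bmatrix t n M \<and> runlength_constrained d M"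
    and dvd: "(d + 1) dvd t" and "k \<le> n"
    and err: "avg_error t n k Mp Dec < 1/4"
  shows "3/4 * real (n choose k) < real (\<Sum>i\<le>k * (t div (d + 1)). t choose i)"
proof -
  define W where "W = weight_vecs n k"
  define C where "C = n choose k"
  let ?out = "\<lambda>M x. nagt_outcome t n M x"
  let ?bad = "\<lambda>M. {x\<in>W. Dec M (?out M x) \<noteq> x}"
  have W: "finite W" "card W = C"
    unfolding W_def C_def by (simp_all add: finite_weight_vecs card_weight_vecs)
  have C: "real C > 0" using \<open>k \<le> n\<close> by (simp add: C_def)
  have "(\<Sum>x\<in>W. measure_pmf.prob Mp {M. Dec M (?out M x) \<noteq> x}) < real C / 4"
    using err C by (simp add: avg_error_def W_def C_def field_simps)
  from pmf_obtain_card_less[OF W(1) this]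
  obtain M where M: "M \<in> set_pmf Mp" and bad: "real (card (?bad M)) < real C / 4" .
  define G where "G = {x\<in>W. Dec M (?out M x) = x}"
  have "G \<union> ?bad M = W" unfolding G_def by auto
  then have "C = card (G \<union> ?bad M)" using W by simp
  also have "\<dots> = card G + card (?bad M)"
    using W(1) by (intro card_Un_disjoint) (auto simp: G_def)
  finally have good: "3/4 * real C < real (card G)" using bad by linarith
  have "inj_on (?out M) G"
    by (rule inj_onI) (metis (mono_tags, lifting) G_def mem_Collect_eq)
  moreover have "?out M ` G \<subseteq>
      {y. (\<forall>i. y i \<longrightarrow> i < t) \<and> card {i. y i} \<le> k * (t div (d + 1))}"
    using supp M card_nagt_outcome_le[OF _ _ dvd]
    by (auto simp: G_def W_def nagt_outcome_def)
  ultimately have "card G \<le>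
      card {y. (\<forall>i. y i \<longrightarrow> i < t) \<and> card {i. y i} \<le> k * (t div (d + 1))}"
    by (rule card_inj_on_le[OF _ _ finite_sparse_bvecs])
  also have "\<dots> \<le> (\<Sum>i\<le>k * (t div (d + 1)). t choose i)"
    by (rule card_sparse_bvecs_le)
  finally have "real (card G) \<le> real (\<Sum>i\<le>k * (t div (d + 1)). t choose i)"
    by (rule of_nat_mono)
  with good show ?thesis unfolding C_def by linarith
qed

lemma binomial_le_ratio_pow:
  fixes Mp :: "bmatrix pmf" and Dec :: "bmatrix \<Rightarrow> bvec \<Rightarrow> bvec"
  assumes k: "k \<ge> 1" and dk: "d \<ge> 2 * k" and "k < n" and dvd: "(d + 1) dvd t"
    and supp: "\<forall>M\<in>set_pmf Mp. is_bmatrix t n M \<and> runlength_constrained d M"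
    and err: "avg_error t n k Mp Dec < 1/4"
  shows "real (n choose k) \<le> (real d / real k) ^ (8 * (k * (t div (d + 1))))"
proof -
  define C where "C = n choose k"
  define w where "w = t div (d + 1)"
  have t: "t = (d + 1) * w" unfolding w_def by (rule dvd_mult_div_cancel[OF dvd, symmetric])
  have CN: "3/4 * real C < real (\<Sum>i\<le>k * w. t choose i)"
    using binomial_less_sum_binomial[OF supp dvd _ err] \<open>k < n\<close> unfolding C_def w_def by simp
  have nk1: "real n / real k > 1" using \<open>k < n\<close> k by simp
  have "(real n / real k) ^ k \<le> real C"
    unfolding C_def using binomial_ge_n_over_k_pow_k[of k n] \<open>k < n\<close> by simp
  moreover have "real n / real k \<le> (real n / real k) ^ k"
    using nk1 k by (metis less_eq_real_def power_increasing power_one_right)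
  ultimately have "real C > 1" using nk1 by linarith
  then have C2: "real C \<ge> 2" by simp
  have w: "w \<ge> 1"
  proof (rule ccontr)
    assume "\<not> w \<ge> 1"
    then have "w = 0" by simp
    then have "(\<Sum>i\<le>k * w. t choose i) = 1" by simp
    then show False using CN C2 by simp
  qed
  have "real C \<le> (3/4 * real C) ^ 2" using C2 by (simp add: power2_eq_square field_simps)
  also have "\<dots> \<le> real (\<Sum>i\<le>k * w. t choose i) ^ 2"
    using CN C2 by (intro power_mono) auto
  also have "\<dots> \<le> ((real d / real k) ^ (4 * (k * w))) ^ 2"
    using sum_binomial_le_ratio_pow[OF k dk w]
    by (intro power_mono) (auto simp: t simp del: of_nat_sum)
  finally show ?thesis by (simp add: C_def w_def power_mult[symmetric] mult_ac)
qed

lemma runlength_nagt_lower_bound: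
  fixes Mp :: "bmatrix pmf" and Dec :: "bmatrix \<Rightarrow> bvec \<Rightarrow> bvec"
  assumes k: "k \<ge> 1" and dk: "d \<ge> 2 * k" and dvd: "(d + 1) dvd t"
    and supp: "\<forall>M\<in>set_pmf Mp. is_bmatrix t n M \<and> runlength_constrained d M"
    and err: "avg_error t n k Mp Dec < 1/4"
  shows "1/8 * real d * log 2 (real n / real k) / log 2 (real d / real k) \<le> real t"
proof -
  define r where "r = real d / real k"
  have r2: "r \<ge> 2" using k dk by (simp add: r_def field_simps)
  then have lnr: "ln r > 0" by simp
  show ?thesis
  proof (cases "k < n")
    case False
    then have "real n / real k \<le> 1" using k by simp
    moreover have "real n / real k > 0" if "n > 0" using that k by simp
    ultimately have "log 2 (real n / real k) \<le> 0"
      by (cases "n = 0") (auto simp: log_def divide_nonpos_pos)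
    then have "1/8 * real d * log 2 (real n / real k) \<le> 0"
      by (simp add: mult_nonneg_nonpos)
    moreover have "log 2 (real d / real k) > 0" using r2 by (simp add: r_def)
    ultimately have "1/8 * real d * log 2 (real n / real k) / log 2 (real d / real k) \<le> 0"
      by (rule divide_nonpos_pos)
    then show ?thesis by linarith
  next
    case True
    define w where "w = t div (d + 1)"
    have t: "t = (d + 1) * w" unfolding w_def by (rule dvd_mult_div_cancel[OF dvd, symmetric])
    have nk1: "real n / real k > 1" using True k by simp
    have "(real n / real k) ^ k \<le> real (n choose k)"
      using binomial_ge_n_over_k_pow_k[of k n] True by simp
    also have "\<dots> \<le> (r ^ (8 * w)) ^ k"
      using binomial_le_ratio_pow[OF k dk True dvd supp err]
      by (simp add: r_def w_def power_mult[symmetric] mult_ac)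
    finally have "real n / real k \<le> r ^ (8 * w)"
      using k nk1 r2 by (subst (asm) power_mono_iff) auto
    then have "ln (real n / real k) \<le> ln (r ^ (8 * w))"
      using nk1 r2 by (subst ln_le_cancel_iff) auto
    then have logs: "ln (real n / real k) \<le> 8 * real w * ln r"
      using r2 by (simp add: ln_realpow)
    have "1/8 * real d * log 2 (real n / real k) / log 2 (real d / real k)
          = real d * ln (real n / real k) / (8 * ln r)"
      by (simp add: r_def[symmetric] log_def field_simps)
    also have "\<dots> \<le> real d * (8 * real w * ln r) / (8 * ln r)"
      using logs lnr by (intro divide_right_mono mult_left_mono) auto
    also have "\<dots> = real d * real w" using lnr by simp
    also have "\<dots> \<le> real t" unfolding t by simp
    finally show ?thesis .
  qed
qed

theorem theorem4:
  shows "\<exists>c::real > 0. \<forall>(k::nat \<Rightarrow> nat) (d::nat \<Rightarrow> nat) (t::nat \<Rightarrow> nat)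
            (Mp::nat \<Rightarrow> bmatrix pmf) (Dec::nat \<Rightarrow> bmatrix \<Rightarrow> bvec \<Rightarrow> bvec).
     (\<forall>n. k n \<ge> 1 \<and> d n \<ge> 2 * k n \<and> (d n + 1) dvd t n) \<longrightarrow>
     (\<forall>n. \<forall>M\<in>set_pmf (Mp n). is_bmatrix (t n) n M \<and> runlength_constrained (d n) M) \<longrightarrow>
     (\<lambda>n. avg_error (t n) n (k n) (Mp n) (Dec n)) \<longlonglongrightarrow> 0 \<longrightarrow>
     (\<forall>\<^sub>F n in sequentially.
        real (t n) \<ge> c * real (d n) * log 2 (real n / real (k n)) / log 2 (real (d n) / real (k n)))"
proof (intro exI[of _ "1/8"] conjI allI impI)
  fix k d t :: "nat \<Rightarrow> nat" and Mp :: "nat \<Rightarrow> bmatrix pmf"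
    and Dec :: "nat \<Rightarrow> bmatrix \<Rightarrow> bvec \<Rightarrow> bvec"
  assume params: "\<forall>n. k n \<ge> 1 \<and> d n \<ge> 2 * k n \<and> (d n + 1) dvd t n"
    and supp: "\<forall>n. \<forall>M\<in>set_pmf (Mp n). is_bmatrix (t n) n M \<and> runlength_constrained (d n) M"
    and err: "(\<lambda>n. avg_error (t n) n (k n) (Mp n) (Dec n)) \<longlonglongrightarrow> 0"
  have "\<forall>\<^sub>F n in sequentially. avg_error (t n) n (k n) (Mp n) (Dec n) < 1/4"
    using err by (rule order_tendstoD) simp
  then show "\<forall>\<^sub>F n in sequentially.
      1/8 * real (d n) * log 2 (real n / real (k n)) / log 2 (real (d n) / real (k n)) \<le> real (t n)"
  proof eventually_elim
    case (elim n)
    then show ?case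
      using params supp by (intro runlength_nagt_lower_bound) auto
  qed
qed simp

end
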